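(* If a polynomial dynamical system $\frac{d\mathbf{x}}{dt}=f(\mathbf{x})$ on $\mathbb{R}^d_{\ge 0}$ is weakly reversible, then it is generated by a weakly reversible reaction network whose set of source nodes is the set of exponent vectors of the monomials of $f$.
   Context: A reaction network (E-graph) $\mathcal{G}=(\mathcal{V},\mathcal{E})$ is a finite directed graph whose nodes are distinct elements of a finite set $Y\subset\mathbb{R}^d_{\ge 0}$, with $\mathcal{V}\neq\emptyset$, every node incident to at least one edge, and no edge from a node to itself. For an edge $e$, $\mathbf{s}(e)$ is its source node, $\mathbf{t}(e)$ its target, $\mathbf{v}(e)=\mathbf{t}(e)-\mathbf{s}(e)$. Given positive rate constants $(k_e)$, $\mathcal{G}$ generates the system $\frac{d\mathbf{x}}{dt}=\sum_{e}k_e\mathbf{x}^{\mathbf{s}(e)}\mathbf{v}(e)$ ($\mathbf{x}^{\mathbf{y}}=\prod_i x_i^{y_i}$, $0^0=1$). $\mathcal{G}$ is weakly reversible if every edge lies in a directed cycle. A polynomial dynamical system is weakly reversible if it is generated, for some positive rate constants, by some weakly reversible network. The monomials of $f$ are those $\mathbf{x}^{\mathbf{y}}$ appearing in $f$ with nonzero (vector) coefficient. *)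

theory Defs
  imports "HOL-Analysis.Analysis"
begin

definition nonneg :: "real ^ 'd \<Rightarrow> bool" where
  "nonneg y \<longleftrightarrow> (\<forall>i. y $ i \<ge> 0)"

(* x^y = prod_i x_i^{y_i}, with the convention 0^0 = 1 (Isabelle's powr has 0 powr 0 = 0). *)
definition monom :: "real ^ 'd \<Rightarrow> real ^ 'd \<Rightarrow> real" where
  "monom x y = (\<Prod>i\<in>UNIV. if y $ i = 0 then 1 else (x $ i) powr (y $ i))"

(* A reaction network (E-graph), given by its finite set of edges (source, target);
   the node set is the set of nodes incident to some edge. *)
definition egraph :: "((real ^ 'd) \<times> (real ^ 'd)) set \<Rightarrow> bool" where
  "egraph E \<longleftrightarrow> finite E \<and> E \<noteq> {} \<and>
     (\<forall>(y, y') \<in> E. y \<noteq> y' \<and> nonneg y \<and> nonneg y')"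

definition weakly_reversible_graph :: "((real ^ 'd) \<times> (real ^ 'd)) set \<Rightarrow> bool" where
  "weakly_reversible_graph E \<longleftrightarrow> (\<forall>(y, y') \<in> E. (y', y) \<in> E\<^sup>*)"

definition source_nodes :: "((real ^ 'd) \<times> (real ^ 'd)) set \<Rightarrow> (real ^ 'd) set" where
  "source_nodes E = fst ` E"

definition mas_system ::
  "((real ^ 'd) \<times> (real ^ 'd)) set \<Rightarrow> ((real ^ 'd) \<times> (real ^ 'd) \<Rightarrow> real)
     \<Rightarrow> real ^ 'd \<Rightarrow> real ^ 'd" where
  "mas_system E k x = (\<Sum>e\<in>E. (k e * monom x (fst e)) *\<^sub>R (snd e - fst e))"

definition generated_by ::
  "(real ^ 'd \<Rightarrow> real ^ 'd) \<Rightarrow> ((real ^ 'd) \<times> (real ^ 'd)) set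
     \<Rightarrow> ((real ^ 'd) \<times> (real ^ 'd) \<Rightarrow> real) \<Rightarrow> bool" where
  "generated_by f E k \<longleftrightarrow> egraph E \<and> (\<forall>e\<in>E. k e > 0) \<and>
     (\<forall>x. nonneg x \<longrightarrow> f x = mas_system E k x)"

definition weakly_reversible_system :: "(real ^ 'd \<Rightarrow> real ^ 'd) \<Rightarrow> bool" where
  "weakly_reversible_system f \<longleftrightarrow>
     (\<exists>E k. weakly_reversible_graph E \<and> generated_by f E k)"

definition monomial_exponents :: "(real ^ 'd \<Rightarrow> real ^ 'd) \<Rightarrow> (real ^ 'd) set \<Rightarrow> bool" where
  "monomial_exponents f S \<longleftrightarrow> finite S \<and> (\<forall>y\<in>S. nonneg y) \<and>
     (\<exists>c. (\<forall>y\<in>S. c y \<noteq> 0) \<and> (\<forall>x. nonneg x \<longrightarrow> f x = (\<Sum>y\<in>S. monom x y *\<^sub>R c y)))"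

end

theory Submission
  imports Defs
begin

text \<open>
  Encode a network by a nonnegative rate function \<open>K\<close> on pairs of nodes from a finite set \<open>V\<close>.
  The system it generates is \<open>\<Sum>a\<in>V. x\<^sup>a w(a)\<close> with the net vector
  \<open>w(a) = \<Sum>b. K(a,b) (b - a)\<close>, and since monomials are linearly independent on the positive
  orthant, the monomials of \<open>f\<close> are exactly the \<open>x\<^sup>a\<close> with \<open>w(a) \<noteq> 0\<close>. A source \<open>y\<close> with
  \<open>w(y) = 0\<close> is removed by replacing every path \<open>a \<rightarrow> y \<rightarrow> b\<close> by an edge \<open>a \<rightarrow> b\<close> of rate
  \<open>K(a,y) K(y,b) / \<Sum>c. K(y,c)\<close>: the flow into \<open>y\<close> is passed on in the proportions in which
  \<open>y\<close> emits, which changes no net vector because \<open>w(y) = 0\<close>, and every cycle through \<open>y\<close>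
  survives as a shortcut, so weak reversibility is kept. Removing such sources one by one
  leaves a weakly reversible network whose sources are exactly the exponents of \<open>f\<close>.
\<close>

section \<open>Linear independence of monomials\<close>

lemma power_functions_linear_independent:
  fixes C :: "real \<Rightarrow> 'b::real_normed_vector"
  assumes "finite R" and vanish: "\<And>s. s > 0 \<Longrightarrow> (\<Sum>r\<in>R. s powr r *\<^sub>R C r) = 0"
    and "r0 \<in> R"
  shows "C r0 = 0"
proof (rule ccontr)
  assume "C r0 \<noteq> 0"
  define R' where "R' = {r\<in>R. C r \<noteq> 0}"
  define m where "m = Max R'"
  have "finite R'" "R' \<noteq> {}"
    using assms \<open>C r0 \<noteq> 0\<close> by (auto simp: R'_def)
  then have "m \<in> R'" and below_m: "\<And>r. r \<in> R' \<Longrightarrow> r \<le> m"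
    by (simp_all add: m_def)
  have "eventually (\<lambda>s. (\<Sum>r\<in>R'. s powr (r - m) *\<^sub>R C r) = 0) at_top"
    using eventually_gt_at_top[of 0]
  proof eventually_elim
    case (elim s)
    have "(\<Sum>r\<in>R'. s powr r *\<^sub>R C r) = (\<Sum>r\<in>R. s powr r *\<^sub>R C r)"
      using assms by (intro sum.mono_neutral_left) (auto simp: R'_def)
    then have "(\<Sum>r\<in>R'. s powr r *\<^sub>R C r) = 0"
      using vanish[OF elim] by simp
    moreover have "(\<Sum>r\<in>R'. s powr (r - m) *\<^sub>R C r) = (\<Sum>r\<in>R'. s powr r *\<^sub>R C r) /\<^sub>R s powr m"
      by (simp add: powr_diff scaleR_sum_right divide_inverse mult.commute)
    ultimately show ?case
      by simp
  qed
  then have to_0: "((\<lambda>s. \<Sum>r\<in>R'. s powr (r - m) *\<^sub>R C r) \<longlongrightarrow> 0) at_top"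
    by (rule tendsto_eventually)
  have "((\<lambda>s. s powr (r - m) *\<^sub>R C r) \<longlongrightarrow> (if r = m then C r else 0)) at_top"
    if "r \<in> R'" for r
  proof (cases "r = m")
    case True
    have "eventually (\<lambda>s. C r = s powr (r - m) *\<^sub>R C r) at_top"
      using eventually_gt_at_top[of 0] by eventually_elim (simp add: True)
    with True show ?thesis
      by (intro Lim_transform_eventually[OF tendsto_const]) simp
  next
    case False
    with below_m[OF that] have "r - m < 0" by simp
    then have "((\<lambda>s. s powr (r - m)) \<longlongrightarrow> 0) at_top"
      using tendsto_neg_powr[OF _ filterlim_ident] by blast
    then show ?thesis
      using False tendsto_scaleR[OF _ tendsto_const] by fastforce
  qed
  then have "((\<lambda>s. \<Sum>r\<in>R'. s powr (r - m) *\<^sub>R C r) \<longlongrightarrow> (\<Sum>r\<in>R'. if r = m then C r else 0)) at_top"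
    by (rule tendsto_sum)
  then have "((\<lambda>s. \<Sum>r\<in>R'. s powr (r - m) *\<^sub>R C r) \<longlongrightarrow> C m) at_top"
    using \<open>finite R'\<close> \<open>m \<in> R'\<close> by simp
  with to_0 have "C m = 0"
    using tendsto_unique[OF trivial_limit_at_top_linorder] by blast
  with \<open>m \<in> R'\<close> show False
    by (simp add: R'_def)
qed

lemma monom_eq_prod_powr:
  assumes "\<And>i. x $ i > 0"
  shows "monom x a = (\<Prod>i\<in>UNIV. x $ i powr a $ i)"
  unfolding monom_def using assms by (intro prod.cong) (auto simp: less_imp_neq[symmetric])

lemma monom_scale_coordinate:
  assumes "\<And>j. x $ j > 0" and "s > 0"
  shows "monom (\<chi> j. if j = i then s * x $ j else x $ j) a = s powr (a $ i) * monom x a"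
proof -
  have "monom (\<chi> j. if j = i then s * x $ j else x $ j) a
      = (\<Prod>j\<in>UNIV. (if j = i then s powr (a $ i) else 1) * x $ j powr a $ j)"
    using assms by (subst monom_eq_prod_powr) (auto intro!: prod.cong simp: powr_mult less_imp_le)
  also have "\<dots> = s powr (a $ i) * monom x a"
    using assms by (simp add: prod.distrib monom_eq_prod_powr)
  finally show ?thesis .
qed

lemma monomial_sum_fibre_eq_0:
  fixes g :: "real ^ 'd \<Rightarrow> 'b::real_normed_vector"
  assumes "finite A" and vanish: "\<And>x. (\<forall>j. x $ j > 0) \<Longrightarrow> (\<Sum>a\<in>A. monom x a *\<^sub>R g a) = 0"
    and "a0 \<in> A" and "\<forall>j. x $ j > 0"
  shows "(\<Sum>a\<in>{a\<in>A. a $ i = a0 $ i}. monom x a *\<^sub>R g a) = 0"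
proof -
  define fibre where "fibre r = {a\<in>A. a $ i = r}" for r
  \<comment> \<open>Scaling coordinate \<open>i\<close> by \<open>s\<close> turns the sum into power functions of \<open>s\<close>, one per value
    of the \<open>i\<close>-th exponent, with the sums over the fibres as coefficients.\<close>
  have "(\<Sum>a\<in>fibre (a0 $ i). monom x a *\<^sub>R g a) = 0"
  proof (rule power_functions_linear_independent)
    show "finite ((\<lambda>a. a $ i) ` A)" "a0 $ i \<in> (\<lambda>a. a $ i) ` A"
      using assms(1,3) by auto
    fix s :: real
    assume "s > 0"
    have "0 = (\<Sum>a\<in>A. monom (\<chi> j. if j = i then s * x $ j else x $ j) a *\<^sub>R g a)"
      using vanish assms(4) \<open>s > 0\<close> by simp
    also have "\<dots> = (\<Sum>a\<in>A. s powr (a $ i) *\<^sub>R monom x a *\<^sub>R g a)"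
      using assms(4) \<open>s > 0\<close> by (simp add: monom_scale_coordinate)
    also have "\<dots> = (\<Sum>r\<in>(\<lambda>a. a $ i) ` A. \<Sum>a\<in>fibre r. s powr (a $ i) *\<^sub>R monom x a *\<^sub>R g a)"
      unfolding fibre_def by (rule sum.image_gen[OF assms(1)])
    also have "\<dots> = (\<Sum>r\<in>(\<lambda>a. a $ i) ` A. s powr r *\<^sub>R (\<Sum>a\<in>fibre r. monom x a *\<^sub>R g a))"
      unfolding scaleR_sum_right by (intro sum.cong refl) (auto simp: fibre_def)
    finally show "(\<Sum>r\<in>(\<lambda>a. a $ i) ` A. s powr r *\<^sub>R (\<Sum>a\<in>fibre r. monom x a *\<^sub>R g a)) = 0"
      by simp
  qed
  then show ?thesis
    by (simp add: fibre_def)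
qed

lemma monomials_linear_independent:
  fixes g :: "real ^ 'd \<Rightarrow> 'b::real_normed_vector"
  assumes "finite A" and "\<And>x. (\<forall>i. x $ i > 0) \<Longrightarrow> (\<Sum>a\<in>A. monom x a *\<^sub>R g a) = 0"
    and "a0 \<in> A"
  shows "g a0 = 0"
  using assms
proof (induction "card A" arbitrary: A rule: less_induct)
  case less
  show ?case
  proof (cases "A = {a0}")
    case True
    then show ?thesis
      using less.prems(2)[of "\<chi> j. 1"] by (simp add: monom_eq_prod_powr)
  next
    case False
    then obtain b where "b \<in> A" "b \<noteq> a0"
      using less.prems(3) by blast
    then obtain i where "b $ i \<noteq> a0 $ i"
      by (auto simp: vec_eq_iff)
    let ?fibre = "{a\<in>A. a $ i = a0 $ i}"
    have "?fibre \<subset> A"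
      using \<open>b \<in> A\<close> \<open>b $ i \<noteq> a0 $ i\<close> by auto
    then have "card ?fibre < card A"
      using less.prems(1) by (simp add: psubset_card_mono)
    moreover have "finite ?fibre" "a0 \<in> ?fibre"
      using less.prems by auto
    ultimately show ?thesis
      using less.hyps monomial_sum_fibre_eq_0[OF less.prems] by blast
  qed
qed

lemma monomial_support_unique:
  fixes g h :: "real ^ 'd \<Rightarrow> 'b::real_normed_vector"
  assumes "finite A" "finite B"
    and "\<And>x. (\<forall>i. x $ i > 0) \<Longrightarrow> (\<Sum>a\<in>A. monom x a *\<^sub>R g a) = (\<Sum>b\<in>B. monom x b *\<^sub>R h b)"
  shows "{a\<in>A. g a \<noteq> 0} = {b\<in>B. h b \<noteq> 0}"
proof -
  define g' where "g' a = (if a \<in> A then g a else 0)" for a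
  define h' where "h' a = (if a \<in> B then h a else 0)" for a
  have "g' a - h' a = 0" if "a \<in> A \<union> B" for a
  proof (rule monomials_linear_independent[of "A \<union> B"])
    fix x :: "real ^ 'd"
    assume "\<forall>i. x $ i > 0"
    have "(\<Sum>a\<in>A \<union> B. monom x a *\<^sub>R g' a) = (\<Sum>a\<in>A. monom x a *\<^sub>R g a)"
      "(\<Sum>a\<in>A \<union> B. monom x a *\<^sub>R h' a) = (\<Sum>b\<in>B. monom x b *\<^sub>R h b)"
      using assms(1,2) by (auto intro!: sum.mono_neutral_cong_right simp: g'_def h'_def)
    with assms(3) \<open>\<forall>i. x $ i > 0\<close>
    show "(\<Sum>a\<in>A \<union> B. monom x a *\<^sub>R (g' a - h' a)) = 0"
      by (simp add: scaleR_diff_right sum_subtractf)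
  qed (use assms that in auto)
  then have "g' a = h' a" for a
    by (cases "a \<in> A \<union> B") (auto simp: g'_def h'_def)
  moreover have "{a\<in>A. g a \<noteq> 0} = {a. g' a \<noteq> 0}" "{b\<in>B. h b \<noteq> 0} = {a. h' a \<noteq> 0}"
    by (auto simp: g'_def h'_def)
  ultimately show ?thesis
    by simp
qed

section \<open>Eliminating a source with zero net vector\<close>

definition bypass_rel :: "('a \<times> 'a) set \<Rightarrow> 'a \<Rightarrow> ('a \<times> 'a) set" where
  "bypass_rel R y = {(a, b). a \<noteq> y \<and> b \<noteq> y \<and> a \<noteq> b \<and> ((a, b) \<in> R \<or> (a, y) \<in> R \<and> (y, b) \<in> R)}"

lemma rtrancl_bypass_rel:
  assumes "(a, c) \<in> R\<^sup>*" and "a \<noteq> y" and "c \<noteq> y"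
  shows "(a, c) \<in> (bypass_rel R y)\<^sup>*"
proof -
  \<comment> \<open>A path that has just entered \<open>y\<close> is remembered by its last vertex \<open>d\<close> before \<open>y\<close>,
    so that the next step \<open>y \<rightarrow> c\<close> can be taken as the shortcut \<open>d \<rightarrow> c\<close>.\<close>
  have "(c \<noteq> y \<longrightarrow> (a, c) \<in> (bypass_rel R y)\<^sup>*) \<and>
        (c = y \<longrightarrow> (\<exists>d. (a, d) \<in> (bypass_rel R y)\<^sup>* \<and> (d, y) \<in> R \<and> d \<noteq> y))"
    using assms(1)
  proof (induction rule: rtrancl_induct)
    case base
    then show ?case using \<open>a \<noteq> y\<close> by simp
  next
    case (step b c)
    show ?case
    proof (cases "b = y")
      case False
      then have "(a, b) \<in> (bypass_rel R y)\<^sup>*"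
        using step.IH by blast
      moreover have "c \<noteq> y \<Longrightarrow> b \<noteq> c \<Longrightarrow> (b, c) \<in> bypass_rel R y"
        using False step.hyps(2) by (simp add: bypass_rel_def)
      ultimately show ?thesis
        using False step.hyps(2) by (cases "b = c") auto
    next
      case True
      then obtain d where d: "(a, d) \<in> (bypass_rel R y)\<^sup>*" "(d, y) \<in> R" "d \<noteq> y"
        using step.IH by blast
      have "c \<noteq> y \<Longrightarrow> d \<noteq> c \<Longrightarrow> (d, c) \<in> bypass_rel R y"
        using True d step.hyps(2) by (simp add: bypass_rel_def)
      then show ?thesis
        using d by (cases "d = c") auto
    qed
  qed
  with \<open>c \<noteq> y\<close> show ?thesis
    by blast
qed

lemma bypass_rel_weakly_reversible:
  assumes "\<forall>(a, b) \<in> R. (b, a) \<in> R\<^sup>*"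
  shows "\<forall>(a, b) \<in> bypass_rel R y. (b, a) \<in> (bypass_rel R y)\<^sup>*"
proof clarify
  fix a b
  assume ab: "(a, b) \<in> bypass_rel R y"
  have "(b, a) \<in> R\<^sup>*"
  proof (cases "(a, b) \<in> R")
    case False
    with ab have "(a, y) \<in> R" "(y, b) \<in> R"
      by (auto simp: bypass_rel_def)
    with assms have "(b, y) \<in> R\<^sup>*" "(y, a) \<in> R\<^sup>*"
      by blast+
    then show ?thesis
      by simp
  qed (use assms in blast)
  moreover have "b \<noteq> y" "a \<noteq> y"
    using ab by (auto simp: bypass_rel_def)
  ultimately show "(b, a) \<in> (bypass_rel R y)\<^sup>*"
    by (rule rtrancl_bypass_rel)
qed

definition rate_edges :: "('a \<times> 'a \<Rightarrow> real) \<Rightarrow> ('a \<times> 'a) set" where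
  "rate_edges K = {e. K e > 0}"

definition net_vector :: "'a::real_vector set \<Rightarrow> ('a \<times> 'a \<Rightarrow> real) \<Rightarrow> 'a \<Rightarrow> 'a" where
  "net_vector V K a = (\<Sum>b\<in>V. K (a, b) *\<^sub>R (b - a))"

definition weakly_reversible_rates :: "'a set \<Rightarrow> ('a \<times> 'a \<Rightarrow> real) \<Rightarrow> bool" where
  "weakly_reversible_rates V K \<longleftrightarrow> (\<forall>e. K e \<ge> 0) \<and> rate_edges K \<subseteq> V \<times> V \<and> (\<forall>a. K (a, a) = 0) \<and>
     rate_edges K \<noteq> {} \<and> (\<forall>(a, b) \<in> rate_edges K. (b, a) \<in> (rate_edges K)\<^sup>*)"

\<comment> \<open>The loop \<open>a \<rightarrow> a\<close> that \<open>a \<rightarrow> y \<rightarrow> a\<close> would create is dropped: it contributes nothing to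
  net vectors, and E-graphs have no loops.\<close>
definition bypass :: "'a set \<Rightarrow> ('a \<times> 'a \<Rightarrow> real) \<Rightarrow> 'a \<Rightarrow> 'a \<times> 'a \<Rightarrow> real" where
  "bypass V K y = (\<lambda>(a, b). if a = y \<or> b = y \<or> a = b then 0
     else K (a, b) + K (a, y) * K (y, b) / (\<Sum>c\<in>V. K (y, c)))"

lemma bypass_nonneg:
  assumes "\<And>e. K e \<ge> 0" and "(\<Sum>c\<in>V. K (y, c)) > 0"
  shows "bypass V K y e \<ge> 0"
  using assms by (auto simp: bypass_def split: prod.splits)

lemma rate_edges_bypass:
  assumes nonneg: "\<And>e. K e \<ge> 0" and "(\<Sum>c\<in>V. K (y, c)) > 0"
  shows "rate_edges (bypass V K y) = bypass_rel (rate_edges K) y"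
proof -
  have "0 < K (a, b) + K (a, y) * K (y, b) / (\<Sum>c\<in>V. K (y, c)) \<longleftrightarrow>
        0 < K (a, b) \<or> 0 < K (a, y) \<and> 0 < K (y, b)" for a b
  proof -
    have "0 < K (a, y) * K (y, b) / (\<Sum>c\<in>V. K (y, c)) \<longleftrightarrow> 0 < K (a, y) \<and> 0 < K (y, b)"
      using nonneg[of "(a, y)"] nonneg[of "(y, b)"] assms(2)
      by (auto simp: zero_less_divide_iff zero_less_mult_iff)
    moreover have "0 \<le> K (a, y) * K (y, b) / (\<Sum>c\<in>V. K (y, c))"
      using nonneg assms(2) by simp
    ultimately show ?thesis
      using nonneg[of "(a, b)"] by linarith
  qed
  then show ?thesis
    by (auto simp: rate_edges_def bypass_rel_def bypass_def split: if_split_asm)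
qed

lemma net_vector_bypass:
  assumes "finite V" and "y \<in> V" and "K (y, y) = 0" and "net_vector V K y = 0"
    and "(\<Sum>c\<in>V. K (y, c)) \<noteq> 0"
  shows "net_vector V (bypass V K y) a = net_vector V K a"
proof (cases "a = y")
  case True
  with assms(4) show ?thesis
    by (simp add: net_vector_def bypass_def)
next
  case False
  define T where "T = (\<Sum>c\<in>V. K (y, c))"
  define V' where "V' = V - {y}"
  have sum_V: "(\<Sum>b\<in>V. g b) = g y + (\<Sum>b\<in>V'. g b)" for g :: "'a \<Rightarrow> 'a"
    unfolding V'_def using assms(1,2) by (rule sum.remove)
  have "(\<Sum>b\<in>V. K (y, b) *\<^sub>R (b - a)) = (\<Sum>b\<in>V. K (y, b) *\<^sub>R (b - y) + K (y, b) *\<^sub>R (y - a))"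
    by (simp add: scaleR_right_distrib[symmetric])
  also have "\<dots> = T *\<^sub>R (y - a)"
    using assms(4) by (simp add: sum.distrib net_vector_def T_def scaleR_sum_left)
  finally have y_out: "(\<Sum>b\<in>V'. K (y, b) *\<^sub>R (b - a)) = T *\<^sub>R (y - a)"
    using assms(3) sum_V by simp
  have "bypass V K y (a, b) *\<^sub>R (b - a)
      = K (a, b) *\<^sub>R (b - a) + (K (a, y) / T) *\<^sub>R K (y, b) *\<^sub>R (b - a)" if "b \<noteq> y" for b
    using False that by (auto simp: bypass_def T_def scaleR_add_left)
  then have "net_vector V (bypass V K y) a
      = (\<Sum>b\<in>V'. K (a, b) *\<^sub>R (b - a)) + (K (a, y) / T) *\<^sub>R (\<Sum>b\<in>V'. K (y, b) *\<^sub>R (b - a))"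
    unfolding net_vector_def sum_V
    by (simp add: bypass_def V'_def sum.distrib scaleR_sum_right)
  also have "\<dots> = net_vector V K a"
    using y_out assms(5) by (simp add: net_vector_def sum_V T_def)
  finally show ?thesis .
qed

lemma net_vector_eq_0_imp_edge_avoiding:
  assumes "finite V" and "\<And>e. K e \<ge> 0" and "rate_edges K \<subseteq> V \<times> V"
    and "net_vector V K y = 0" and "(y, b0) \<in> rate_edges K" and "z \<noteq> y"
  shows "\<exists>b. (y, b) \<in> rate_edges K \<and> b \<noteq> z"
proof (rule ccontr)
  assume "\<not> ?thesis"
  then have only_z: "K (y, b) = 0" if "b \<noteq> z" for b
    using assms(2)[of "(y, b)"] that by (force simp: rate_edges_def)
  with assms(5) have "b0 = z" "K (y, z) > 0"
    by (force simp: rate_edges_def)+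
  with assms(3) have "z \<in> V"
    by (auto simp: rate_edges_def)
  have "net_vector V K y = (\<Sum>b\<in>V. if b = z then K (y, z) *\<^sub>R (z - y) else 0)"
    unfolding net_vector_def by (intro sum.cong) (auto simp: only_z)
  also have "\<dots> = K (y, z) *\<^sub>R (z - y)"
    using assms(1) \<open>z \<in> V\<close> by simp
  finally show False
    using assms(4,6) \<open>K (y, z) > 0\<close> by simp
qed

lemma bypass_rel_nonempty:
  assumes "finite V" and "weakly_reversible_rates V K"
    and "(y, b0) \<in> rate_edges K" and "net_vector V K y = 0"
  shows "bypass_rel (rate_edges K) y \<noteq> {}"
proof -
  let ?R = "rate_edges K"
  have nonneg: "\<And>e. K e \<ge> 0" and "?R \<subseteq> V \<times> V" and loop_free: "\<And>a. K (a, a) = 0"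
    and cycles: "\<forall>(a, b) \<in> ?R. (b, a) \<in> ?R\<^sup>*"
    using assms(2) by (auto simp: weakly_reversible_rates_def)
  \<comment> \<open>Some \<open>z \<rightarrow> y\<close> closes the cycle through \<open>y \<rightarrow> b0\<close>; as \<open>w(y) = 0\<close>, \<open>y\<close> also emits to
    some \<open>b \<noteq> z\<close>, and \<open>z \<rightarrow> y \<rightarrow> b\<close> becomes a shortcut.\<close>
  have "b0 \<noteq> y"
    using assms(3) loop_free by (auto simp: rate_edges_def)
  moreover have "(b0, y) \<in> ?R\<^sup>*"
    using cycles assms(3) by blast
  ultimately obtain z where "(z, y) \<in> ?R"
    by (blast elim: rtranclE)
  then have "z \<noteq> y"
    using loop_free by (auto simp: rate_edges_def)
  then obtain b where "(y, b) \<in> ?R" "b \<noteq> z"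
    using net_vector_eq_0_imp_edge_avoiding[OF assms(1) nonneg \<open>?R \<subseteq> V \<times> V\<close> assms(4,3)] by blast
  then have "(z, b) \<in> bypass_rel ?R y"
    using \<open>(z, y) \<in> ?R\<close> \<open>z \<noteq> y\<close> loop_free by (auto simp: bypass_rel_def rate_edges_def)
  then show ?thesis
    by blast
qed

lemma weakly_reversible_rates_bypass:
  assumes "finite V" and "weakly_reversible_rates V K"
    and "(y, b0) \<in> rate_edges K" and "net_vector V K y = 0"
  shows "weakly_reversible_rates V (bypass V K y)"
    and "\<And>a. net_vector V (bypass V K y) a = net_vector V K a"
    and "fst ` rate_edges (bypass V K y) \<subseteq> fst ` rate_edges K - {y}"
proof -
  let ?R = "rate_edges K"
  have nonneg: "\<And>e. K e \<ge> 0" and "?R \<subseteq> V \<times> V" and loop_free: "\<And>a. K (a, a) = 0"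
    and cycles: "\<forall>(a, b) \<in> ?R. (b, a) \<in> ?R\<^sup>*"
    using assms(2) by (auto simp: weakly_reversible_rates_def)
  then have "y \<in> V" "b0 \<in> V"
    using assms(3) by auto
  have "K (y, b0) \<le> (\<Sum>c\<in>V. K (y, c))"
    using assms(1) \<open>b0 \<in> V\<close> nonneg by (intro member_le_sum) auto
  then have T_pos: "(\<Sum>c\<in>V. K (y, c)) > 0"
    using assms(3) by (simp add: rate_edges_def)
  have edges: "rate_edges (bypass V K y) = bypass_rel ?R y"
    using nonneg T_pos by (rule rate_edges_bypass)
  have "bypass_rel ?R y \<noteq> {}"
    using assms by (rule bypass_rel_nonempty)
  moreover have "bypass_rel ?R y \<subseteq> V \<times> V"
    using \<open>?R \<subseteq> V \<times> V\<close> by (auto simp: bypass_rel_def)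
  ultimately show "weakly_reversible_rates V (bypass V K y)"
    unfolding weakly_reversible_rates_def edges
    using bypass_nonneg[OF nonneg T_pos] bypass_rel_weakly_reversible[OF cycles]
    by (simp add: bypass_def)
  show "net_vector V (bypass V K y) a = net_vector V K a" for a
    using assms(1) \<open>y \<in> V\<close> loop_free assms(4) T_pos by (intro net_vector_bypass) auto
  show "fst ` rate_edges (bypass V K y) \<subseteq> fst ` ?R - {y}"
    unfolding edges by (force simp: bypass_rel_def)
qed

lemma net_vector_nonzero_imp_source:
  assumes "\<And>e. K e \<ge> 0" and "net_vector V K a \<noteq> 0"
  shows "a \<in> fst ` rate_edges K"
proof -
  have "\<exists>b. K (a, b) \<noteq> 0"
  proof (rule ccontr)
    assume "\<nexists>b. K (a, b) \<noteq> 0"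
    then have "net_vector V K a = 0"
      by (simp add: net_vector_def)
    with assms(2) show False ..
  qed
  then obtain b where "K (a, b) \<noteq> 0" ..
  with assms(1)[of "(a, b)"] have "(a, b) \<in> rate_edges K"
    by (simp add: rate_edges_def)
  then show ?thesis
    by force
qed

lemma weakly_reversible_rates_minimal_sources:
  assumes "finite V" and "weakly_reversible_rates V K"
  shows "\<exists>K'. weakly_reversible_rates V K' \<and> (\<forall>a. net_vector V K' a = net_vector V K a) \<and>
           fst ` rate_edges K' = {a. net_vector V K a \<noteq> 0}"
  using assms(2)
proof (induction "card (fst ` rate_edges K)" arbitrary: K rule: less_induct)
  case less
  show ?case
  proof (cases "\<exists>y\<in>fst ` rate_edges K. net_vector V K y = 0")
    case False
    moreover have "{a. net_vector V K a \<noteq> 0} \<subseteq> fst ` rate_edges K"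
      using less.prems net_vector_nonzero_imp_source by (auto simp: weakly_reversible_rates_def)
    ultimately have "fst ` rate_edges K = {a. net_vector V K a \<noteq> 0}"
      by blast
    with less.prems show ?thesis
      by blast
  next
    case True
    then obtain y b0 where y: "(y, b0) \<in> rate_edges K" "net_vector V K y = 0"
      by force
    note bypass = weakly_reversible_rates_bypass[OF assms(1) less.prems y]
    have "rate_edges K \<subseteq> V \<times> V"
      using less.prems by (simp add: weakly_reversible_rates_def)
    then have "finite (fst ` rate_edges K)"
      using finite_subset assms(1) by blast
    moreover have "fst ` rate_edges (bypass V K y) \<subset> fst ` rate_edges K"
      using bypass(3) y(1) by force
    ultimately have "card (fst ` rate_edges (bypass V K y)) < card (fst ` rate_edges K)"
      by (rule psubset_card_mono)
    from less.hyps[OF this bypass(1)] show ?thesis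
      unfolding bypass(2) .
  qed
qed

section \<open>Weakly reversible realizations\<close>

lemma mas_system_rate_edges:
  fixes K :: "(real ^ 'd) \<times> (real ^ 'd) \<Rightarrow> real"
  assumes "finite V" and "\<And>e. K e \<ge> 0" and "rate_edges K \<subseteq> V \<times> V"
  shows "mas_system (rate_edges K) K x = (\<Sum>a\<in>V. monom x a *\<^sub>R net_vector V K a)"
proof -
  have "K e = 0" if "e \<notin> rate_edges K" for e
    using assms(2)[of e] that by (simp add: rate_edges_def)
  then have "mas_system (rate_edges K) K x = (\<Sum>e\<in>V \<times> V. (K e * monom x (fst e)) *\<^sub>R (snd e - fst e))"
    unfolding mas_system_def using assms(1,3) by (intro sum.mono_neutral_left) auto
  also have "\<dots> = (\<Sum>a\<in>V. \<Sum>b\<in>V. (K (a, b) * monom x a) *\<^sub>R (b - a))"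
    by (simp add: sum.cartesian_product split_def)
  also have "\<dots> = (\<Sum>a\<in>V. monom x a *\<^sub>R net_vector V K a)"
    by (simp add: net_vector_def scaleR_sum_right mult.commute)
  finally show ?thesis .
qed

lemma weakly_reversible_system_rates:
  assumes "weakly_reversible_system f"
  obtains V K where "finite V" "\<forall>v\<in>V. nonneg v" "weakly_reversible_rates V K"
    "\<And>x. nonneg x \<Longrightarrow> f x = (\<Sum>a\<in>V. monom x a *\<^sub>R net_vector V K a)"
proof -
  obtain E k where wr: "weakly_reversible_graph E" and "generated_by f E k"
    using assms unfolding weakly_reversible_system_def by blast
  then have "egraph E" and k_pos: "\<forall>e\<in>E. k e > 0"
    and f_eq: "\<And>x. nonneg x \<Longrightarrow> f x = mas_system E k x"
    by (auto simp: generated_by_def)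
  define V where "V = fst ` E \<union> snd ` E"
  define K where "K e = (if e \<in> E then k e else 0)" for e
  have edges: "rate_edges K = E"
    using k_pos by (auto simp: rate_edges_def K_def)
  have "finite V" "\<forall>v\<in>V. nonneg v" "E \<noteq> {}" and loop_free: "\<forall>(a, b)\<in>E. a \<noteq> b"
    using \<open>egraph E\<close> by (auto simp: egraph_def V_def)
  have nonneg_K: "\<And>e. K e \<ge> 0"
    using k_pos by (simp add: K_def less_imp_le)
  moreover have "E \<subseteq> V \<times> V"
    by (force simp: V_def)
  moreover have "K (a, a) = 0" for a
    using loop_free by (auto simp: K_def)
  ultimately have "weakly_reversible_rates V K"
    using wr \<open>E \<noteq> {}\<close> by (simp add: weakly_reversible_rates_def weakly_reversible_graph_def edges)
  moreover have "f x = (\<Sum>a\<in>V. monom x a *\<^sub>R net_vector V K a)" if "nonneg x" for x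
  proof -
    have "f x = mas_system (rate_edges K) K x"
      unfolding f_eq[OF that] edges mas_system_def by (intro sum.cong) (auto simp: K_def)
    also have "\<dots> = (\<Sum>a\<in>V. monom x a *\<^sub>R net_vector V K a)"
      using \<open>finite V\<close> nonneg_K \<open>E \<subseteq> V \<times> V\<close> edges by (intro mas_system_rate_edges) auto
    finally show ?thesis .
  qed
  ultimately show ?thesis
    by (rule that[OF \<open>finite V\<close> \<open>\<forall>v\<in>V. nonneg v\<close>])
qed

lemma generated_by_rate_edges:
  assumes "finite V" and "\<forall>v\<in>V. nonneg v" and wr: "weakly_reversible_rates V K"
    and "\<And>x. nonneg x \<Longrightarrow> f x = (\<Sum>a\<in>V. monom x a *\<^sub>R net_vector V K a)"
  shows "weakly_reversible_graph (rate_edges K)" and "generated_by f (rate_edges K) K"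
proof -
  have nonneg_K: "\<And>e. K e \<ge> 0" and sub: "rate_edges K \<subseteq> V \<times> V" and "rate_edges K \<noteq> {}"
    and loop_free: "\<And>a. K (a, a) = 0"
    using wr by (auto simp: weakly_reversible_rates_def)
  have "finite (rate_edges K)"
    using finite_subset[OF sub] assms(1) by simp
  moreover have "a \<noteq> b \<and> nonneg a \<and> nonneg b" if "(a, b) \<in> rate_edges K" for a b
    using that sub assms(2) loop_free[of a] by (auto simp: rate_edges_def)
  ultimately have "egraph (rate_edges K)"
    using \<open>rate_edges K \<noteq> {}\<close> by (auto simp: egraph_def)
  moreover have "\<forall>e\<in>rate_edges K. K e > 0"
    by (simp add: rate_edges_def)
  ultimately show "generated_by f (rate_edges K) K"
    unfolding generated_by_def using assms(4) mas_system_rate_edges[OF assms(1) nonneg_K sub] by simp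
  show "weakly_reversible_graph (rate_edges K)"
    using wr by (simp add: weakly_reversible_rates_def weakly_reversible_graph_def)
qed

theorem theorem4:
  fixes f :: "real ^ 'd \<Rightarrow> real ^ 'd" and S :: "(real ^ 'd) set"
  assumes "weakly_reversible_system f"
    and "monomial_exponents f S"
  shows "\<exists>E k. weakly_reversible_graph E \<and> generated_by f E k \<and> source_nodes E = S"
proof -
  obtain V K0 where V: "finite V" "\<forall>v\<in>V. nonneg v" and "weakly_reversible_rates V K0"
    and f_K0: "\<And>x. nonneg x \<Longrightarrow> f x = (\<Sum>a\<in>V. monom x a *\<^sub>R net_vector V K0 a)"
    using weakly_reversible_system_rates[OF assms(1)] by blast
  obtain K where wr: "weakly_reversible_rates V K"
    and same_net: "\<And>a. net_vector V K a = net_vector V K0 a"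
    and sources: "fst ` rate_edges K = {a. net_vector V K0 a \<noteq> 0}"
    using weakly_reversible_rates_minimal_sources[OF V(1) \<open>weakly_reversible_rates V K0\<close>] by blast
  obtain c where "finite S" and c: "\<forall>y\<in>S. c y \<noteq> 0"
    and f_S: "\<And>x. nonneg x \<Longrightarrow> f x = (\<Sum>y\<in>S. monom x y *\<^sub>R c y)"
    using assms(2) unfolding monomial_exponents_def by blast
  have "{a\<in>V. net_vector V K0 a \<noteq> 0} = {y\<in>S. c y \<noteq> 0}"
    using V(1) \<open>finite S\<close> f_K0 f_S
    by (intro monomial_support_unique) (auto simp: nonneg_def less_imp_le)
  moreover have "fst ` rate_edges K \<subseteq> V"
    using wr by (auto simp: weakly_reversible_rates_def)
  ultimately have "source_nodes (rate_edges K) = S"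
    using sources c unfolding source_nodes_def by blast
  moreover have "\<And>x. nonneg x \<Longrightarrow> f x = (\<Sum>a\<in>V. monom x a *\<^sub>R net_vector V K a)"
    using f_K0 by (simp add: same_net)
  ultimately show ?thesis
    using generated_by_rate_edges[OF V wr] by blast
qed

end
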